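(* Let $(A,\mu,\alpha)$ be a commutative Hom-associative algebra, $k$ a natural number, and $D:A\to A$ a linear map commuting with $\alpha$ such that $D(ab)=D(a)\alpha^k(b)+\alpha^k(a)D(b)$ for all $a,b\in A$. Define $x\bullet y=\alpha^k(x)D(y)$. Then $(A,\bullet,\alpha^{k+1})$ is a Hom-Novikov algebra.
   Context: A Hom-associative algebra $(A,\mu,\alpha)$: linear space, bilinear $\mu(x\otimes y)=xy$, linear $\alpha$ with $\alpha(xy)=\alpha(x)\alpha(y)$ and $\alpha(x)(yz)=(xy)\alpha(z)$; commutative means $xy=yx$. A Hom-Novikov algebra $(A,\cdot,\gamma)$ is a left Hom-pre-Lie algebra, i.e. $\gamma(x\cdot y)=\gamma(x)\cdot\gamma(y)$ and $\gamma(x)\cdot(y\cdot z)-(x\cdot y)\cdot\gamma(z)=\gamma(y)\cdot(x\cdot z)-(y\cdot x)\cdot\gamma(z)$, which moreover satisfies $(x\cdot y)\cdot\gamma(z)=(x\cdot z)\cdot\gamma(y)$ for all $x,y,z$. *)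

theory Defs
  imports Complex_Main
begin

definition bilinear_mult :: "('k::field \<Rightarrow> 'a::ab_group_add \<Rightarrow> 'a) \<Rightarrow> ('a \<Rightarrow> 'a \<Rightarrow> 'a) \<Rightarrow> bool" where
  "bilinear_mult scale mu \<longleftrightarrow>
     (\<forall>x. Vector_Spaces.linear scale scale (\<lambda>y. mu x y)) \<and> (\<forall>y. Vector_Spaces.linear scale scale (\<lambda>x. mu x y))"

definition hom_assoc_algebra ::
  "('k::field \<Rightarrow> 'a::ab_group_add \<Rightarrow> 'a) \<Rightarrow> ('a \<Rightarrow> 'a \<Rightarrow> 'a) \<Rightarrow> ('a \<Rightarrow> 'a) \<Rightarrow> bool" where
  "hom_assoc_algebra scale mu alpha \<longleftrightarrow>
     Vector_Spaces.vector_space scale \<and> bilinear_mult scale mu \<and> Vector_Spaces.linear scale scale alpha \<and>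
     (\<forall>x y. alpha (mu x y) = mu (alpha x) (alpha y)) \<and>
     (\<forall>x y z. mu (alpha x) (mu y z) = mu (mu x y) (alpha z))"

definition commutative_mult :: "('a \<Rightarrow> 'a \<Rightarrow> 'a) \<Rightarrow> bool" where
  "commutative_mult mu \<longleftrightarrow> (\<forall>x y. mu x y = mu y x)"

definition hom_left_pre_lie ::
  "('k::field \<Rightarrow> 'a::ab_group_add \<Rightarrow> 'a) \<Rightarrow> ('a \<Rightarrow> 'a \<Rightarrow> 'a) \<Rightarrow> ('a \<Rightarrow> 'a) \<Rightarrow> bool" where
  "hom_left_pre_lie scale mu gamma \<longleftrightarrow>
     Vector_Spaces.vector_space scale \<and> bilinear_mult scale mu \<and> Vector_Spaces.linear scale scale gamma \<and>
     (\<forall>x y. gamma (mu x y) = mu (gamma x) (gamma y)) \<and>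
     (\<forall>x y z. mu (gamma x) (mu y z) - mu (mu x y) (gamma z)
              = mu (gamma y) (mu x z) - mu (mu y x) (gamma z))"

definition hom_novikov ::
  "('k::field \<Rightarrow> 'a::ab_group_add \<Rightarrow> 'a) \<Rightarrow> ('a \<Rightarrow> 'a \<Rightarrow> 'a) \<Rightarrow> ('a \<Rightarrow> 'a) \<Rightarrow> bool" where
  "hom_novikov scale mu gamma \<longleftrightarrow>
     hom_left_pre_lie scale mu gamma \<and>
     (\<forall>x y z. mu (mu x y) (gamma z) = mu (mu x z) (gamma y))"

end

theory Submission
  imports Defs
begin

text \<open>Write \<open>\<beta> = \<alpha>\<^sup>k\<close>, so \<open>x \<bullet> y = \<beta> x \<cdot> D y\<close> and \<open>\<gamma> = \<alpha>\<beta>\<close>. Since \<open>D\<close>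
commutes with \<open>\<gamma>\<close>, Hom-associativity gives
\<open>(x \<bullet> y) \<bullet> \<gamma> z = (\<beta>\<^sup>2x \<cdot> \<beta>Dy) \<cdot> \<alpha>\<beta>Dz = \<alpha>\<beta>\<^sup>2x \<cdot> (\<beta>Dy \<cdot> \<beta>Dz)\<close>, which is symmetric in \<open>y, z\<close> by
commutativity. Expanding \<open>D (\<beta>y \<cdot> Dz)\<close> by the twisted Leibniz rule gives
\<open>\<gamma>x \<bullet> (y \<bullet> z) = (x \<bullet> y) \<bullet> \<gamma>z + (\<beta>\<^sup>2x \<cdot> \<beta>\<^sup>2y) \<cdot> \<alpha>D\<^sup>2z\<close>, so the associator of
\<open>\<bullet>\<close> is symmetric in \<open>x, y\<close>, again by commutativity.\<close>

lemma linear_funpow: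
  assumes "Vector_Spaces.vector_space scale" and "Vector_Spaces.linear scale scale f"
  shows "Vector_Spaces.linear scale scale (f ^^ n)"
proof (induction n)
  case 0
  then show ?case using vector_space.linear_id[OF assms(1)] by (simp add: id_def)
next
  case (Suc n)
  then show ?case using Vector_Spaces.linear_compose[OF Suc assms(2)] by (simp add: o_def)
qed

lemma bilinear_mult_compose:
  assumes "bilinear_mult scale mu"
    and "Vector_Spaces.linear scale scale f" and "Vector_Spaces.linear scale scale g"
  shows "bilinear_mult scale (\<lambda>x y. mu (f x) (g y))"
  unfolding bilinear_mult_def
proof (intro conjI allI)
  fix x
  have "Vector_Spaces.linear scale scale (\<lambda>y. mu (f x) y)"
    using assms(1) unfolding bilinear_mult_def by blast
  from Vector_Spaces.linear_compose[OF assms(3) this]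
  show "Vector_Spaces.linear scale scale (\<lambda>y. mu (f x) (g y))" by (simp add: o_def)
next
  fix y
  have "Vector_Spaces.linear scale scale (\<lambda>x. mu x (g y))"
    using assms(1) unfolding bilinear_mult_def by blast
  from Vector_Spaces.linear_compose[OF assms(2) this]
  show "Vector_Spaces.linear scale scale (\<lambda>x. mu (f x) (g y))" by (simp add: o_def)
qed

lemma funpow_mult_hom:
  assumes "\<And>x y. f (mu x y) = mu (f x) (f y)"
  shows "(f ^^ n) (mu x y) = mu ((f ^^ n) x) ((f ^^ n) y)"
  by (induction n) (simp_all add: assms)

lemma funpow_commute:
  assumes "\<And>x. g (f x) = f (g x)"
  shows "g ((f ^^ n) x) = (f ^^ n) (g x)"
  by (induction n) (simp_all add: assms)

locale hom_assoc_derivation =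
  fixes mu :: "'a::ab_group_add \<Rightarrow> 'a \<Rightarrow> 'a" and alpha D :: "'a \<Rightarrow> 'a" and k :: nat
  assumes mu_add_right: "mu x (y + z) = mu x y + mu x z"
    and alpha_mult: "alpha (mu x y) = mu (alpha x) (alpha y)"
    and hom_assoc: "mu (alpha x) (mu y z) = mu (mu x y) (alpha z)"
    and D_alpha: "D (alpha x) = alpha (D x)"
    and leibniz: "D (mu x y) = mu (D x) ((alpha ^^ k) y) + mu ((alpha ^^ k) x) (D y)"
begin

abbreviation beta :: "'a \<Rightarrow> 'a" where "beta \<equiv> alpha ^^ k"

abbreviation gamma :: "'a \<Rightarrow> 'a" where "gamma \<equiv> alpha ^^ (k + 1)"

definition dmult :: "'a \<Rightarrow> 'a \<Rightarrow> 'a" where "dmult x y = mu (beta x) (D y)"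

lemma beta_mult: "beta (mu x y) = mu (beta x) (beta y)"
  using funpow_mult_hom alpha_mult by metis

lemma D_beta: "D (beta x) = beta (D x)"
  using funpow_commute D_alpha by metis

lemma beta_alpha: "beta (alpha x) = alpha (beta x)"
  by (simp add: funpow_swap1)

lemma gamma_dmult: "gamma (dmult x y) = dmult (gamma x) (gamma y)"
  by (simp add: dmult_def alpha_mult beta_mult D_alpha D_beta beta_alpha)

lemma dmult_dmult_gamma:
  "dmult (dmult x y) (gamma z) = mu (mu (beta (beta x)) (beta (D y))) (alpha (beta (D z)))"
  by (simp add: dmult_def beta_mult D_alpha D_beta beta_alpha hom_assoc)

lemma gamma_dmult_dmult:
  "dmult (gamma x) (dmult y z)
     = dmult (dmult x y) (gamma z) + mu (mu (beta (beta x)) (beta (beta y))) (alpha (D (D z)))"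
proof -
  have "dmult (gamma x) (dmult y z)
      = mu (mu (beta (beta x)) (beta (D y))) (alpha (beta (D z)))
        + mu (mu (beta (beta x)) (beta (beta y))) (alpha (D (D z)))"
    by (simp add: dmult_def leibniz D_beta beta_alpha mu_add_right hom_assoc)
  then show ?thesis
    using dmult_dmult_gamma[of x y z] by simp
qed

end

locale comm_hom_assoc_derivation = hom_assoc_derivation +
  assumes mu_comm: "mu x y = mu y x"
begin

lemma dmult_right_comm: "dmult (dmult x y) (gamma z) = dmult (dmult x z) (gamma y)"
  using dmult_dmult_gamma[of x y z] dmult_dmult_gamma[of x z y] hom_assoc mu_comm by metis

lemma dmult_hom_left_symmetric:
  "dmult (gamma x) (dmult y z) - dmult (dmult x y) (gamma z)
     = dmult (gamma y) (dmult x z) - dmult (dmult y x) (gamma z)"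
  using gamma_dmult_dmult[of x y z] gamma_dmult_dmult[of y x z] mu_comm by simp

end

theorem mainTheorem11:
  fixes scale :: "'k::field \<Rightarrow> 'a::ab_group_add \<Rightarrow> 'a"
    and mu :: "'a \<Rightarrow> 'a \<Rightarrow> 'a" and alpha D :: "'a \<Rightarrow> 'a" and k :: nat
  assumes "hom_assoc_algebra scale mu alpha"
    and "commutative_mult mu"
    and "Vector_Spaces.linear scale scale D"
    and "D \<circ> alpha = alpha \<circ> D"
    and "\<forall>a b. D (mu a b) = mu (D a) ((alpha ^^ k) b) + mu ((alpha ^^ k) a) (D b)"
  shows "hom_novikov scale (\<lambda>x y. mu ((alpha ^^ k) x) (D y)) (alpha ^^ (k + 1))"
proof -
  from assms(1) have vs: "Vector_Spaces.vector_space scale"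
    and bl: "bilinear_mult scale mu" and la: "Vector_Spaces.linear scale scale alpha"
    and alpha_mult: "\<And>x y. alpha (mu x y) = mu (alpha x) (alpha y)"
    and hom_assoc: "\<And>x y z. mu (alpha x) (mu y z) = mu (mu x y) (alpha z)"
    unfolding hom_assoc_algebra_def by auto
  have "comm_hom_assoc_derivation mu alpha D k"
  proof
    show "mu x (y + z) = mu x y + mu x z" for x y z
      using bl unfolding bilinear_mult_def Vector_Spaces.linear_iff by blast
    show "D (alpha x) = alpha (D x)" for x
      using fun_cong[OF assms(4)] by simp
    show "mu x y = mu y x" for x y
      using assms(2) unfolding commutative_mult_def by blast
  qed (use alpha_mult hom_assoc assms(5) in blast)+
  then interpret comm_hom_assoc_derivation mu alpha D k .
  have "bilinear_mult scale dmult"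
    unfolding dmult_def[abs_def]
    by (rule bilinear_mult_compose[OF bl linear_funpow[OF vs la] assms(3)])
  then show ?thesis
    unfolding hom_novikov_def hom_left_pre_lie_def dmult_def[symmetric, abs_def]
    using vs linear_funpow[OF vs la] gamma_dmult dmult_hom_left_symmetric dmult_right_comm
    by blast
qed

end
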